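(* Let $G$ be a chordal graph and $(T,\mathcal{S})$ a subtree model of $G$. Let $C,C',C''$ be three distinct maximal cliques of $G$. If the clique subtree $S_T(C')$ intersects the connecting path $p(S_T(C),S_T(C''))$, then $C'$ is a separator in $G$ (i.e. some two vertices of $G-C'$ lie in different connected components of $G-C'$).
   Context: A subtree model of a graph $G$ is a pair $(T,\mathcal{S})$ where $T$ is a tree and $\mathcal{S}=\{S_v \mid v\in V(G)\}$ is a family of connected subtrees of $T$ such that for any two distinct vertices $u,v$, $S_u\cap S_v\neq\emptyset$ iff $uv\in E(G)$. For a maximal clique $C$ of $G$, the clique subtree is $S_T(C)=\bigcap_{v\in C}S_v$; by the Helly property it is nonempty, and clique subtrees of distinct maximal cliques are disjoint. For two disjoint subtrees $S,S'$ of $T$, the connecting path $p(S,S')$ is the minimal subgraph $P$ of $T$ (a path) such that $S\cup S'\cup P$ is connected; it contains exactly one node of $S$ and one node of $S'$. *)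

theory Defs
  imports Main
begin

definition simple_graph :: "'a set \<Rightarrow> ('a \<Rightarrow> 'a \<Rightarrow> bool) \<Rightarrow> bool" where
  "simple_graph V E \<longleftrightarrow> finite V \<and> (\<forall>u v. E u v \<longrightarrow> u \<in> V \<and> v \<in> V)
     \<and> (\<forall>u v. E u v \<longrightarrow> E v u) \<and> (\<forall>v. \<not> E v v)"

definition is_path :: "('a \<Rightarrow> 'a \<Rightarrow> bool) \<Rightarrow> 'a list \<Rightarrow> bool" where
  "is_path E xs \<longleftrightarrow> xs \<noteq> [] \<and> distinct xs \<and>
     (\<forall>i. Suc i < length xs \<longrightarrow> E (xs ! i) (xs ! Suc i))"

definition connected_set :: "('a \<Rightarrow> 'a \<Rightarrow> bool) \<Rightarrow> 'a set \<Rightarrow> bool" where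
  "connected_set E A \<longleftrightarrow> (\<forall>x\<in>A. \<forall>y\<in>A. \<exists>xs. is_path E xs \<and> set xs \<subseteq> A \<and> hd xs = x \<and> last xs = y)"

definition is_tree :: "'b set \<Rightarrow> ('b \<Rightarrow> 'b \<Rightarrow> bool) \<Rightarrow> bool" where
  "is_tree N F \<longleftrightarrow> simple_graph N F \<and> N \<noteq> {} \<and> connected_set F N \<and>
     (\<forall>xs. is_path F xs \<and> 3 \<le> length xs \<longrightarrow> \<not> F (last xs) (hd xs))"

(* chordal: every cycle of length at least 4 has a chord *)
definition chordal :: "'a set \<Rightarrow> ('a \<Rightarrow> 'a \<Rightarrow> bool) \<Rightarrow> bool" where
  "chordal V E \<longleftrightarrow> (\<forall>xs. is_path E xs \<and> set xs \<subseteq> V \<and> 4 \<le> length xs \<and> E (last xs) (hd xs) \<longrightarrow>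
     (\<exists>i j. i < j \<and> j < length xs \<and> j \<noteq> Suc i \<and> \<not> (i = 0 \<and> j = length xs - 1)
            \<and> E (xs ! i) (xs ! j)))"

definition is_clique :: "'a set \<Rightarrow> ('a \<Rightarrow> 'a \<Rightarrow> bool) \<Rightarrow> 'a set \<Rightarrow> bool" where
  "is_clique V E C \<longleftrightarrow> C \<subseteq> V \<and> (\<forall>u\<in>C. \<forall>v\<in>C. u \<noteq> v \<longrightarrow> E u v)"

definition maximal_clique :: "'a set \<Rightarrow> ('a \<Rightarrow> 'a \<Rightarrow> bool) \<Rightarrow> 'a set \<Rightarrow> bool" where
  "maximal_clique V E C \<longleftrightarrow> is_clique V E C \<and> (\<forall>D. is_clique V E D \<and> C \<subseteq> D \<longrightarrow> D = C)"

definition subtree_model :: "'a set \<Rightarrow> ('a \<Rightarrow> 'a \<Rightarrow> bool) \<Rightarrow> 'b set \<Rightarrow> ('b \<Rightarrow> 'b \<Rightarrow> bool)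
    \<Rightarrow> ('a \<Rightarrow> 'b set) \<Rightarrow> bool" where
  "subtree_model V E N F S \<longleftrightarrow> is_tree N F \<and>
     (\<forall>v\<in>V. S v \<noteq> {} \<and> S v \<subseteq> N \<and> connected_set F (S v)) \<and>
     (\<forall>u\<in>V. \<forall>v\<in>V. u \<noteq> v \<longrightarrow> (S u \<inter> S v \<noteq> {} \<longleftrightarrow> E u v))"

definition clique_subtree :: "('a \<Rightarrow> 'b set) \<Rightarrow> 'a set \<Rightarrow> 'b set" where
  "clique_subtree S C = (\<Inter>v\<in>C. S v)"

definition connecting_path :: "('b \<Rightarrow> 'b \<Rightarrow> bool) \<Rightarrow> 'b set \<Rightarrow> 'b set \<Rightarrow> 'b set" where
  "connecting_path F A B = {x. \<exists>xs. is_path F xs \<and> hd xs \<in> A \<and> last xs \<in> B \<and>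
     (\<forall>i. 0 < i \<and> i < length xs - 1 \<longrightarrow> xs ! i \<notin> A \<union> B) \<and> x \<in> set xs}"

definition separator :: "'a set \<Rightarrow> ('a \<Rightarrow> 'a \<Rightarrow> bool) \<Rightarrow> 'a set \<Rightarrow> bool" where
  "separator V E C \<longleftrightarrow> (\<exists>u\<in>V - C. \<exists>w\<in>V - C.
     \<not> (\<exists>xs. is_path E xs \<and> set xs \<subseteq> V - C \<and> hd xs = u \<and> last xs = w))"

end

theory Submission
  imports Defs
begin

text \<open>
  Pick \<open>u \<in> C - C'\<close> and \<open>w \<in> C'' - C'\<close>, and a node \<open>x\<close> of \<open>S\<^sub>T(C')\<close> on the tree path
  from \<open>S\<^sub>T(C)\<close> to \<open>S\<^sub>T(C'')\<close>. If some path of \<open>G - C'\<close> joined \<open>u\<close> and \<open>w\<close>, the union of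
  the subtrees of its vertices would be a connected subgraph of \<open>T\<close> containing both ends of
  that tree path, hence, as \<open>T\<close> is a tree, the whole path and in particular \<open>x\<close>. So \<open>x \<in> S\<^sub>v\<close>
  for some \<open>v \<notin> C'\<close>, and \<open>C' \<union> {v}\<close> would be a clique, contradicting maximality of \<open>C'\<close>.
\<close>

text \<open>Consecutive entries of a walk may coincide, so that walks meeting in a node
  concatenate by plain append.\<close>

inductive walk :: "('b \<Rightarrow> 'b \<Rightarrow> bool) \<Rightarrow> 'b list \<Rightarrow> bool" for F where
  walk_single: "walk F [x]"
| walk_Cons: "walk F (y # xs) \<Longrightarrow> x = y \<or> F x y \<Longrightarrow> walk F (x # y # xs)"

lemma walk_nonempty: "walk F xs \<Longrightarrow> xs \<noteq> []"
  by (induction rule: walk.induct) auto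

lemma walk_append:
  "walk F xs \<Longrightarrow> walk F ys \<Longrightarrow> last xs = hd ys \<or> F (last xs) (hd ys) \<Longrightarrow> walk F (xs @ ys)"
proof (induction rule: walk.induct)
  case (walk_single x)
  then show ?case
    using walk_nonempty[of F ys] by (cases ys) (auto intro: walk.walk_Cons)
qed (auto intro: walk.walk_Cons)

lemma is_path_imp_walk: "is_path F xs \<Longrightarrow> walk F xs"
proof (induction xs)
  case (Cons x xs)
  then show ?case
    by (cases xs) (auto simp: is_path_def intro!: walk.intros, force+)
qed (simp add: is_path_def)

lemma is_path_Cons:
  "is_path F xs \<Longrightarrow> F y (hd xs) \<Longrightarrow> y \<notin> set xs \<Longrightarrow> is_path F (y # xs)"
  unfolding is_path_def
  by (auto simp: nth_Cons split: nat.splits) (metis hd_conv_nth)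

lemma is_path_take: "is_path F xs \<Longrightarrow> 0 < n \<Longrightarrow> is_path F (take n xs)"
  unfolding is_path_def by auto

lemma is_path_hd_eq_last: "is_path F xs \<Longrightarrow> hd xs = last xs \<Longrightarrow> xs = [hd xs]"
  unfolding is_path_def by (cases xs) (auto split: if_splits)

lemma tree_path_neighbour_is_next:
  assumes "is_tree N F" and "is_path F (x # xs)" and "F x y" and "y \<in> set xs"
  shows "y = hd xs"
proof (rule ccontr)
  assume "y \<noteq> hd xs"
  obtain k where k: "k < length xs" "xs ! k = y"
    using \<open>y \<in> set xs\<close> by (metis in_set_conv_nth)
  then have "0 < k"
    using \<open>y \<noteq> hd xs\<close> by (metis gr0I hd_conv_nth list.size(3) not_less0)
  let ?cycle = "take (Suc (Suc k)) (x # xs)"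
  have "is_path F ?cycle"
    using is_path_take[OF assms(2)] by blast
  moreover have "3 \<le> length ?cycle" and "last ?cycle = y" and "hd ?cycle = x"
    using k \<open>0 < k\<close> by (auto simp: take_Suc_conv_app_nth)
  moreover have "F y x"
    using assms(1,3) by (auto simp: is_tree_def simple_graph_def)
  ultimately show False
    using assms(1) unfolding is_tree_def by metis
qed

lemma tree_path_subset_walk:
  assumes tree: "is_tree N F"
  shows "walk F W \<Longrightarrow> is_path F P \<Longrightarrow> hd P = hd W \<Longrightarrow> last P = last W \<Longrightarrow> set P \<subseteq> set W"
proof (induction W arbitrary: P rule: walk.induct)
  case (walk_single x)
  then show ?case
    using is_path_hd_eq_last[of F P] by fastforce
next
  case (walk_Cons y W x)
  show ?case
  proof (cases "x = y")
    case True
    then show ?thesis using walk_Cons by auto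
  next
    case False
    then have "F x y" using walk_Cons.hyps by simp
    obtain P' where P: "P = x # P'"
      using walk_Cons.prems by (cases P) (auto simp: is_path_def)
    show ?thesis
    proof (cases "y \<in> set P'")
      case True
      then have "y = hd P'"
        using tree_path_neighbour_is_next[OF tree] walk_Cons.prems(1) \<open>F x y\<close> P by blast
      moreover have "is_path F P'"
        using walk_Cons.prems(1) True unfolding P is_path_def by auto
      moreover have "last P' = last (y # W)"
        using walk_Cons.prems(3) True unfolding P by (auto split: if_splits)
      ultimately show ?thesis
        using walk_Cons.IH[of P'] P by auto
    next
      case False
      have "F y x"
        using tree \<open>F x y\<close> by (auto simp: is_tree_def simple_graph_def)
      then have "is_path F (y # P)"
        using is_path_Cons[OF walk_Cons.prems(1)] False \<open>x \<noteq> y\<close> P by auto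
      then show ?thesis
        using walk_Cons.IH[of "y # P"] walk_Cons.prems(3) P by auto
    qed
  qed
qed

lemma subtree_model_path_within:
  assumes "subtree_model V E N F S" and "v \<in> V" and "t \<in> S v" and "t' \<in> S v"
  obtains P where "is_path F P" "set P \<subseteq> S v" "hd P = t" "last P = t'"
proof -
  have "connected_set F (S v)"
    using assms(1,2) by (simp add: subtree_model_def)
  then show ?thesis
    using assms(3,4) that unfolding connected_set_def by blast
qed

lemma subtree_model_adjacent_meet:
  assumes "subtree_model V E N F S" and "u \<in> V" and "v \<in> V" and "u \<noteq> v" and "E u v"
  obtains s where "s \<in> S u" "s \<in> S v"
proof -
  have "S u \<inter> S v \<noteq> {}"
    using assms unfolding subtree_model_def by blast
  then show ?thesis
    using that by blast
qed

lemma subtree_model_walk_lifts: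
  assumes model: "subtree_model V E N F S"
  shows "walk E vs \<Longrightarrow> set vs \<subseteq> V \<Longrightarrow> t \<in> S (hd vs) \<Longrightarrow> t' \<in> S (last vs) \<Longrightarrow>
    \<exists>W. walk F W \<and> hd W = t \<and> last W = t' \<and> set W \<subseteq> (\<Union>v\<in>set vs. S v)"
proof (induction vs arbitrary: t rule: walk.induct)
  case (walk_single x)
  then have "x \<in> V" "t \<in> S x" "t' \<in> S x" by auto
  then obtain P where "is_path F P" "set P \<subseteq> S x" "hd P = t" "last P = t'"
    using subtree_model_path_within[OF model] by blast
  then show ?case
    using is_path_imp_walk by fastforce
next
  case (walk_Cons y vs x)
  show ?case
  proof (cases "x = y")
    case True
    then show ?thesis using walk_Cons by fastforce
  next
    case False
    have "x \<in> V" "y \<in> V" using walk_Cons.prems by auto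
    then obtain s where s: "s \<in> S x" "s \<in> S y"
      using subtree_model_adjacent_meet[OF model] False walk_Cons.hyps by metis
    obtain P where P: "is_path F P" "set P \<subseteq> S x" "hd P = t" "last P = s"
      using subtree_model_path_within[OF model \<open>x \<in> V\<close> _ s(1)] walk_Cons.prems(2) by auto
    obtain W where W: "walk F W" "hd W = s" "last W = t'" "set W \<subseteq> (\<Union>v\<in>set (y # vs). S v)"
      using walk_Cons.IH[of s] walk_Cons.prems s by auto
    have "walk F (P @ W)"
      using walk_append[OF is_path_imp_walk[OF P(1)] W(1)] P(4) W(2) by simp
    moreover have "P \<noteq> []" "W \<noteq> []"
      using P(1) W(1) walk_nonempty by (auto simp: is_path_def)
    ultimately show ?thesis
      using P W by (intro exI[of _ "P @ W"]) auto
  qed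
qed

lemma subtree_model_tree_path_covered:
  assumes model: "subtree_model V E N F S"
    and "is_path E vs" and "set vs \<subseteq> V"
    and "is_path F P" and "hd P \<in> S (hd vs)" and "last P \<in> S (last vs)"
  shows "set P \<subseteq> (\<Union>v\<in>set vs. S v)"
proof -
  obtain W where W: "walk F W" "hd W = hd P" "last W = last P"
    and W_covered: "set W \<subseteq> (\<Union>v\<in>set vs. S v)"
    using subtree_model_walk_lifts[OF model is_path_imp_walk[OF assms(2)] assms(3,5,6)] by blast
  have "is_tree N F"
    using model by (simp add: subtree_model_def)
  then have "set P \<subseteq> set W"
    using tree_path_subset_walk W(1) assms(4) W(2,3) by metis
  then show ?thesis
    using W_covered by blast
qed

lemma maximal_clique_not_subset:
  "maximal_clique V E C \<Longrightarrow> maximal_clique V E C' \<Longrightarrow> C \<noteq> C' \<Longrightarrow> \<not> C \<subseteq> C'"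
  by (metis maximal_clique_def)

lemma mem_maximal_clique_if_meets_clique_subtree:
  assumes model: "subtree_model V E N F S" and max: "maximal_clique V E C"
    and "x \<in> clique_subtree S C" and "v \<in> V" and "x \<in> S v"
  shows "v \<in> C"
proof -
  have "C \<subseteq> V"
    using max by (simp add: maximal_clique_def is_clique_def)
  have "E a b" if "a \<in> insert v C" "b \<in> insert v C" "a \<noteq> b" for a b
  proof -
    have "x \<in> S a" "x \<in> S b"
      using that(1,2) assms(3,5) unfolding clique_subtree_def by auto
    moreover have "a \<in> V" "b \<in> V"
      using that(1,2) \<open>v \<in> V\<close> \<open>C \<subseteq> V\<close> by auto
    ultimately show ?thesis
      using model \<open>a \<noteq> b\<close> unfolding subtree_model_def by blast
  qed
  then have "is_clique V E (insert v C)"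
    using \<open>v \<in> V\<close> \<open>C \<subseteq> V\<close> by (simp add: is_clique_def)
  then show ?thesis
    using max unfolding maximal_clique_def by blast
qed

theorem lemma4:
  fixes V :: "'a set" and E :: "'a \<Rightarrow> 'a \<Rightarrow> bool"
    and N :: "'b set" and F :: "'b \<Rightarrow> 'b \<Rightarrow> bool" and S :: "'a \<Rightarrow> 'b set"
    and C C' C'' :: "'a set"
  assumes "simple_graph V E" and "chordal V E"
    and "subtree_model V E N F S"
    and "maximal_clique V E C" and "maximal_clique V E C'" and "maximal_clique V E C''"
    and "C \<noteq> C'" and "C' \<noteq> C''" and "C \<noteq> C''"
    and "clique_subtree S C' \<inter>
           connecting_path F (clique_subtree S C) (clique_subtree S C'') \<noteq> {}"
  shows "separator V E C'"
proof -
  obtain x P where x: "x \<in> clique_subtree S C'" "x \<in> set P" and P: "is_path F P"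
    and P_ends: "hd P \<in> clique_subtree S C" "last P \<in> clique_subtree S C''"
    using assms(10) unfolding connecting_path_def by blast
  obtain u where u: "u \<in> C" "u \<notin> C'"
    using maximal_clique_not_subset[OF assms(4,5,7)] by blast
  obtain w where w: "w \<in> C''" "w \<notin> C'"
    using maximal_clique_not_subset[OF assms(6,5)] assms(8) by blast
  have "hd P \<in> S u" "last P \<in> S w"
    using P_ends u(1) w(1) unfolding clique_subtree_def by auto
  have "\<not> is_path E vs" if vs: "set vs \<subseteq> V - C'" "hd vs = u" "last vs = w" for vs
  proof
    assume "is_path E vs"
    then have "set P \<subseteq> (\<Union>v\<in>set vs. S v)"
      using subtree_model_tree_path_covered[OF assms(3) _ _ P] vs \<open>hd P \<in> S u\<close> \<open>last P \<in> S w\<close>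
      by auto
    then obtain v where "v \<in> set vs" "x \<in> S v"
      using x(2) by blast
    then show False
      using mem_maximal_clique_if_meets_clique_subtree[OF assms(3,5) x(1)] vs(1) by blast
  qed
  moreover have "u \<in> V" "w \<in> V"
    using u(1) w(1) assms(4,6) unfolding maximal_clique_def is_clique_def by auto
  ultimately show ?thesis
    unfolding separator_def using u(2) w(2) by blast
qed

end
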